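(* Let $S=\{x_1,\dots,x_N\}$ be a spherical two-distance $2$-design (in its $n$-dimensional span), with inner products $a$ and $b$, and let $\Gamma_1$ be the graph on $\{1,\dots,N\}$ in which distinct $i,j$ are adjacent iff $\langle x_i,x_j\rangle=a$; assume $\Gamma_1$ is a strongly regular graph that is neither complete nor empty. Then the Gram matrix of $S$ coincides with the Gram matrix of $S_1(\Gamma_1)$, or with the Gram matrix of $S_2(\Gamma_1)$, or with the Gram matrix of a regular simplex of $N$ points in $\mathbb{R}^{N-1}$ (all off-diagonal entries equal to $-1/(N-1)$). In particular $S$ is, up to isometry, $S_1(\Gamma_1)$, $S_2(\Gamma_1)$, or a regular $(N-1)$-dimensional simplex.
   Context: A set of unit vectors $\{x_1,\dots,x_N\}$ spanning an $n$-dimensional real inner product space $V$ is a spherical $2$-design if $\sum_i x_i=0$ and $\sum_{i,j=1}^N\langle x_i,x_j\rangle^2=N^2/n$ (equivalently $\sum_i x_i=0$ and $\sum_i\langle x,x_i\rangle^2=\frac Nn\|x\|^2$ for all $x\in V$); it is two-distance if there are two reals $a\ne b$ such that $\langle x_i,x_j\rangle\in\{a,b\}$ for all $i\neq j$. A strongly regular graph is a regular graph in which any two adjacent vertices have a constant number $\lambda$ of common neighbours and any two nonadjacent vertices have a constant number $\mu$ of common neighbours. For such a graph $\Gamma_1$ on $N$ vertices, neither complete nor empty, with adjacency matrix $\Phi_1$, the orthogonal complement $\mathbf{1}^\perp\subset\mathbb{R}^N$ of the all-ones vector decomposes as an orthogonal sum of two eigenspaces $E_1,E_2$ of $\Phi_1$.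 $S_j(\Gamma_1)$ ($j=1,2$) is the set of $N$ vectors obtained by orthogonally projecting the standard basis vectors $e_1,\dots,e_N$ of $\mathbb{R}^N$ onto $E_j$ and normalizing each projection to unit length (vector $i$ coming from $e_i$). *)

theory Defs
  imports "HOL-Analysis.Analysis"
begin

definition strongly_regular :: "('v::finite \<Rightarrow> 'v \<Rightarrow> bool) \<Rightarrow> bool" where
  "strongly_regular adj \<longleftrightarrow>
     (\<forall>i j. adj i j \<longrightarrow> adj j i) \<and> (\<forall>i. \<not> adj i i) \<and>
     (\<exists>k lam mu::nat.
        (\<forall>i. card {j. adj i j} = k) \<and>
        (\<forall>i j. i \<noteq> j \<and> adj i j \<longrightarrow> card {l. adj i l \<and> adj j l} = lam) \<and>
        (\<forall>i j. i \<noteq> j \<and> \<not> adj i j \<longrightarrow> card {l. adj i l \<and> adj j l} = mu))"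

definition complete_graph :: "('v \<Rightarrow> 'v \<Rightarrow> bool) \<Rightarrow> bool" where
  "complete_graph adj \<longleftrightarrow> (\<forall>i j. i \<noteq> j \<longrightarrow> adj i j)"

definition empty_graph :: "('v \<Rightarrow> 'v \<Rightarrow> bool) \<Rightarrow> bool" where
  "empty_graph adj \<longleftrightarrow> (\<forall>i j. \<not> adj i j)"

definition adj_matrix :: "('v::finite \<Rightarrow> 'v \<Rightarrow> bool) \<Rightarrow> real^'v^'v" where
  "adj_matrix adj = (\<chi> i j. if adj i j then 1 else 0)"

definition eigenspace_perp1 :: "real^'v^'v \<Rightarrow> real \<Rightarrow> (real^'v) set" where
  "eigenspace_perp1 M theta = {v. v \<bullet> (\<chi> i. 1) = 0 \<and> M *v v = theta *\<^sub>R v}"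

definition orth_proj :: "'a::real_inner set \<Rightarrow> 'a \<Rightarrow> 'a" where
  "orth_proj E v = (THE p. p \<in> E \<and> (\<forall>w\<in>E. (v - p) \<bullet> w = 0))"

definition proj_normalized_basis :: "(real^'v) set \<Rightarrow> 'v::finite \<Rightarrow> real^'v" where
  "proj_normalized_basis E i =
     (let p = orth_proj E (axis i 1) in (1 / norm p) *\<^sub>R p)"

definition spherical_2design :: "('i::finite \<Rightarrow> 'a::euclidean_space) \<Rightarrow> bool" where
  "spherical_2design x \<longleftrightarrow>
     (\<forall>i. norm (x i) = 1) \<and> (\<Sum>i\<in>UNIV. x i) = 0 \<and>
     (\<Sum>i\<in>UNIV. \<Sum>j\<in>UNIV. (x i \<bullet> x j)\<^sup>2) =
        (real CARD('i))\<^sup>2 / real (dim (span (range x)))"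

end

theory Submission
  imports Defs
begin

(* Write G = (x_i . x_j) for the Gram matrix of the design and
   T y = (SUM l. (x_l . y) x_l) for its frame operator on V = span S.  Over an orthonormal
   basis of V, trace T = N and trace T^2 = sum of all (x_i . x_j)^2 = N^2 / dim V; equality in
   the Cauchy-Schwarz bound trace(T^2) >= (trace T)^2 / dim V forces T = c id with c = N / dim V,
   i.e. G^2 = c G.  As the off-diagonal entries take only the values a and b,
   G = (1 - b) I + (a - b) A + b J with A the adjacency matrix of Gamma_1; since the rows of G
   sum to zero, the vectors v orthogonal to the all-ones vector with A v = theta v,
   theta = (c - 1 + b) / (a - b), are exactly the solutions of G v = c v.  The columns of G / c
   lie in this eigenspace E and e_i minus the i-th column is orthogonal to E, so projecting
   e_i onto E gives the i-th column of G / c; their Gram matrix is G / c and after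
   normalisation it is G.  Hence the first alternative of the theorem always holds. *)

lemma orthonormal_inner_expansion:
  fixes B :: "'a::euclidean_space set"
  assumes orth: "pairwise orthogonal B" and unit: "\<And>e. e \<in> B \<Longrightarrow> norm e = 1"
    and z: "z \<in> span B"
  shows "y \<bullet> z = (\<Sum>e\<in>B. (y \<bullet> e) * (z \<bullet> e))"
proof -
  have "z = (\<Sum>e\<in>B. (z \<bullet> e) *\<^sub>R e)"
    using orthonormal_basis_expand[OF orth unit z pairwise_orthogonal_imp_finite[OF orth]] by simp
  then have "y \<bullet> z = y \<bullet> (\<Sum>e\<in>B. (z \<bullet> e) *\<^sub>R e)" by simp
  also have "\<dots> = (\<Sum>e\<in>B. (y \<bullet> e) * (z \<bullet> e))"
    by (simp add: inner_sum_right mult.commute)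
  finally show ?thesis .
qed

(* Equality case of the Cauchy-Schwarz bound (SUM e:B. |T e|^2) >= (SUM e:B. T e . e)^2 / |B|
   for a finite set B of unit vectors: if it is attained, T acts on B as the scalar
   trace / |B|, since then SUM e:B. |T e - c e|^2 = 0. *)
lemma scalar_if_trace_equality:
  fixes T :: "'a::real_inner \<Rightarrow> 'a"
  assumes fin: "finite B" and unit: "\<And>e. e \<in> B \<Longrightarrow> e \<bullet> e = 1" and n: "card B > 0"
    and tr: "(\<Sum>e\<in>B. T e \<bullet> e) = s"
    and tr2: "(\<Sum>e\<in>B. T e \<bullet> T e) = s\<^sup>2 / card B"
    and e: "e \<in> B"
  shows "T e = (s / card B) *\<^sub>R e"
proof -
  define c where "c = s / card B"
  have "(\<Sum>e\<in>B. (T e - c *\<^sub>R e) \<bullet> (T e - c *\<^sub>R e))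
      = (\<Sum>e\<in>B. T e \<bullet> T e) - 2 * c * (\<Sum>e\<in>B. T e \<bullet> e) + c\<^sup>2 * (\<Sum>e\<in>B. e \<bullet> e)"
    by (simp add: inner_diff_left inner_diff_right sum_subtractf sum_distrib_left inner_commute
        power2_eq_square algebra_simps sum.distrib)
  also have "\<dots> = 0"
    using tr tr2 n unit by (simp add: c_def power2_eq_square field_simps)
  finally have "\<forall>e\<in>B. (T e - c *\<^sub>R e) \<bullet> (T e - c *\<^sub>R e) = 0"
    using fin by (subst (asm) sum_nonneg_eq_0_iff) auto
  then show ?thesis using e by (simp add: c_def)
qed

definition frame_operator :: "('i::finite \<Rightarrow> 'a::real_inner) \<Rightarrow> 'a \<Rightarrow> 'a" where
  "frame_operator x y = (\<Sum>l\<in>UNIV. (x l \<bullet> y) *\<^sub>R x l)"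

lemma linear_frame_operator: "linear (frame_operator x)"
  unfolding linear_iff frame_operator_def
  by (simp add: inner_add_right scaleR_add_left sum.distrib scaleR_sum_right)

lemma inner_frame_operator:
  "frame_operator x y \<bullet> z = (\<Sum>l\<in>UNIV. (x l \<bullet> y) * (x l \<bullet> z))"
  by (simp add: frame_operator_def inner_sum_left)

lemma frame_operator_traces:
  fixes x :: "'i::finite \<Rightarrow> 'a::euclidean_space"
  assumes orth: "pairwise orthogonal B" and unit: "\<And>e. e \<in> B \<Longrightarrow> norm e = 1"
    and in_span: "\<And>l. x l \<in> span B"
  shows "(\<Sum>e\<in>B. frame_operator x e \<bullet> e) = (\<Sum>l\<in>UNIV. x l \<bullet> x l)"
    and "(\<Sum>e\<in>B. frame_operator x e \<bullet> frame_operator x e)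
           = (\<Sum>i\<in>UNIV. \<Sum>j\<in>UNIV. (x i \<bullet> x j)\<^sup>2)"
proof -
  note parseval = orthonormal_inner_expansion[OF orth unit in_span, symmetric]
  have "(\<Sum>e\<in>B. frame_operator x e \<bullet> e) = (\<Sum>l\<in>UNIV. \<Sum>e\<in>B. (x l \<bullet> e) * (x l \<bullet> e))"
    by (simp add: inner_frame_operator sum.swap[of _ B])
  also have "\<dots> = (\<Sum>l\<in>UNIV. x l \<bullet> x l)"
    by (simp add: parseval)
  finally show "(\<Sum>e\<in>B. frame_operator x e \<bullet> e) = (\<Sum>l\<in>UNIV. x l \<bullet> x l)" .
  have "(\<Sum>e\<in>B. frame_operator x e \<bullet> frame_operator x e)
      = (\<Sum>e\<in>B. \<Sum>i\<in>UNIV. \<Sum>j\<in>UNIV. (x i \<bullet> x j) * ((x i \<bullet> e) * (x j \<bullet> e)))"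
    by (simp add: frame_operator_def inner_sum_left inner_sum_right sum_distrib_left algebra_simps
        inner_commute[of "x _" "x _"])
  also have "\<dots> = (\<Sum>i\<in>UNIV. \<Sum>j\<in>UNIV. (x i \<bullet> x j) * (\<Sum>e\<in>B. (x i \<bullet> e) * (x j \<bullet> e)))"
    by (simp add: sum.swap[of _ B] sum_distrib_left)
  also have "\<dots> = (\<Sum>i\<in>UNIV. \<Sum>j\<in>UNIV. (x i \<bullet> x j)\<^sup>2)"
    by (simp add: parseval power2_eq_square)
  finally show "(\<Sum>e\<in>B. frame_operator x e \<bullet> frame_operator x e)
           = (\<Sum>i\<in>UNIV. \<Sum>j\<in>UNIV. (x i \<bullet> x j)\<^sup>2)" .
qed

(* A spherical 2-design is a tight frame: its frame operator is a positive multiple of the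
   identity on its span, because the design condition is the equality case above. *)
lemma spherical_2design_tight_frame:
  fixes x :: "'i::finite \<Rightarrow> 'a::euclidean_space"
  assumes design: "spherical_2design x"
  obtains c where "c > 0" and "\<And>y. y \<in> span (range x) \<Longrightarrow> frame_operator x y = c *\<^sub>R y"
proof -
  have unit_x: "\<And>i. x i \<bullet> x i = 1"
    using design by (simp add: spherical_2design_def norm_eq_1)
  obtain B where orth: "pairwise orthogonal B" and unit: "\<And>e. e \<in> B \<Longrightarrow> norm e = 1"
    and card_B: "card B = dim (span (range x))" and span_B: "span B = span (range x)"
    using orthonormal_basis_subspace[OF subspace_span] by metis
  have in_span: "\<And>l. x l \<in> span B"
    using span_B by (simp add: span_base)
  have fin: "finite B"
    using orth by (rule pairwise_orthogonal_imp_finite)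
  have "x undefined \<in> span B" "x undefined \<noteq> 0"
    using in_span unit_x[of undefined] by auto
  then have "B \<noteq> {}" by auto
  then have card_pos: "card B > 0"
    using fin by (simp add: card_gt_0_iff)
  have unit_inner: "\<And>e. e \<in> B \<Longrightarrow> e \<bullet> e = 1"
    using unit by (simp add: norm_eq_1)
  have trace: "(\<Sum>e\<in>B. frame_operator x e \<bullet> e) = real CARD('i)"
    using frame_operator_traces(1)[where x = x, OF orth unit in_span] by (simp add: unit_x)
  have trace_sq: "(\<Sum>e\<in>B. frame_operator x e \<bullet> frame_operator x e)
                    = (real CARD('i))\<^sup>2 / real (card B)"
    using frame_operator_traces(2)[where x = x, OF orth unit in_span] design card_B
    by (simp add: spherical_2design_def)
  define c where "c = real CARD('i) / card B"
  have scalar_on_B: "frame_operator x e = c *\<^sub>R e" if "e \<in> B" for e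
    using scalar_if_trace_equality[OF fin unit_inner card_pos trace trace_sq that] by (simp add: c_def)
  show ?thesis
  proof (rule that)
    show "c > 0" using card_pos by (simp add: c_def)
    show "frame_operator x y = c *\<^sub>R y" if "y \<in> span (range x)" for y
      using linear_eq_on_span[OF linear_frame_operator linear_scaleR[of c] scalar_on_B] that span_B
      by auto
  qed
qed

lemma spherical_2design_gram_square:
  fixes x :: "'i::finite \<Rightarrow> 'a::euclidean_space"
  assumes "spherical_2design x"
  obtains c where "c > 0" and "\<And>i j. (\<Sum>l\<in>UNIV. (x l \<bullet> x i) * (x l \<bullet> x j)) = c * (x i \<bullet> x j)"
proof -
  obtain c where "c > 0" and scalar: "\<And>y. y \<in> span (range x) \<Longrightarrow> frame_operator x y = c *\<^sub>R y"
    using spherical_2design_tight_frame[OF assms] by blast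
  moreover have "(\<Sum>l\<in>UNIV. (x l \<bullet> x i) * (x l \<bullet> x j)) = c * (x i \<bullet> x j)" for i j
    using inner_frame_operator[of x "x i" "x j"] scalar[of "x i"] by (simp add: span_base)
  ultimately show ?thesis using that by blast
qed

definition matrix_eigenspace :: "('v::finite \<Rightarrow> 'v \<Rightarrow> real) \<Rightarrow> real \<Rightarrow> (real^'v) set" where
  "matrix_eigenspace g c = {v. \<forall>i. (\<Sum>j\<in>UNIV. g i j * v$j) = c * v$i}"

lemma matrix_eigenspace_diff:
  "u \<in> matrix_eigenspace g c \<Longrightarrow> v \<in> matrix_eigenspace g c \<Longrightarrow> u - v \<in> matrix_eigenspace g c"
  by (simp add: matrix_eigenspace_def right_diff_distrib sum_subtractf)

lemma two_distance_adjacency: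
  fixes g :: "'v::finite \<Rightarrow> 'v \<Rightarrow> real"
  assumes diag: "\<And>i. g i i = 1" and two_dist: "\<And>i j. i \<noteq> j \<Longrightarrow> g i j \<in> {a, b}"
  shows "(a - b) * (adj_matrix (\<lambda>i j. i \<noteq> j \<and> g i j = a) *v v)$i
           = (\<Sum>j\<in>UNIV. g i j * v$j) - (1 - b) * v$i - b * (\<Sum>j\<in>UNIV. v$j)"
proof -
  let ?A = "adj_matrix (\<lambda>i j. i \<noteq> j \<and> g i j = a)"
  have entry: "g i j = (if i = j then 1 - b else 0) + (a - b) * ?A$i$j + b" for j
    using two_dist[of i j] diag[of i] by (auto simp: adj_matrix_def)
  have "(\<Sum>j\<in>UNIV. g i j * v$j)
      = (\<Sum>j\<in>UNIV. (if i = j then (1 - b) * v$j else 0) + (a - b) * (?A$i$j * v$j) + b * v$j)"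
    by (intro sum.cong refl) (simp add: entry algebra_simps)
  also have "\<dots> = (1 - b) * v$i + (a - b) * (?A *v v)$i + b * (\<Sum>j\<in>UNIV. v$j)"
    by (simp add: sum.distrib matrix_vector_mult_def sum_distrib_left)
  finally show ?thesis by simp
qed

lemma two_distance_eigenspace:
  fixes g :: "'v::finite \<Rightarrow> 'v \<Rightarrow> real"
  assumes sym: "\<And>i j. g i j = g j i" and diag: "\<And>i. g i i = 1"
    and rows: "\<And>i. (\<Sum>j\<in>UNIV. g i j) = 0"
    and two_dist: "\<And>i j. i \<noteq> j \<Longrightarrow> g i j \<in> {a, b}" and ab: "a \<noteq> b" and c: "c \<noteq> 0"
  shows "eigenspace_perp1 (adj_matrix (\<lambda>i j. i \<noteq> j \<and> g i j = a)) ((c - 1 + b) / (a - b))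
           = matrix_eigenspace g c"
proof -
  let ?A = "adj_matrix (\<lambda>i j. i \<noteq> j \<and> g i j = a)" and ?th = "(c - 1 + b) / (a - b)"
  note adj = two_distance_adjacency[of g a b, OF diag two_dist]
  have sum_one: "v \<bullet> (\<chi> i. 1) = (\<Sum>j\<in>UNIV. v$j)" for v :: "real^'v"
    by (simp add: inner_vec_def)
  have eigen_iff: "?A *v v = ?th *\<^sub>R v \<longleftrightarrow> v \<in> matrix_eigenspace g c"
    if "(\<Sum>j\<in>UNIV. v$j) = 0" for v :: "real^'v"
  proof -
    have "(?A *v v)$i = ?th * v$i \<longleftrightarrow> (\<Sum>j\<in>UNIV. g i j * v$j) = c * v$i" for i
      using adj[of v i] that ab by (auto simp: field_simps)
    then show ?thesis
      by (simp add: vec_eq_iff matrix_eigenspace_def)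
  qed
  have orthogonal_one: "(\<Sum>j\<in>UNIV. v$j) = 0" if "v \<in> matrix_eigenspace g c" for v :: "real^'v"
  proof -
    have "c * (\<Sum>i\<in>UNIV. v$i) = (\<Sum>i\<in>UNIV. \<Sum>j\<in>UNIV. g i j * v$j)"
      using that by (simp add: matrix_eigenspace_def sum_distrib_left)
    also have "\<dots> = (\<Sum>j\<in>UNIV. v$j * (\<Sum>i\<in>UNIV. g j i))"
      by (subst sum.swap) (simp add: sum_distrib_left sym mult.commute)
    also have "\<dots> = 0" by (simp add: rows)
    finally show ?thesis using c by simp
  qed
  show ?thesis
    unfolding eigenspace_perp1_def sum_one using eigen_iff orthogonal_one by blast
qed

lemma orth_proj_eqI:
  fixes E :: "'a::real_inner set"
  assumes diff: "\<And>u w. u \<in> E \<Longrightarrow> w \<in> E \<Longrightarrow> u - w \<in> E"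
    and p: "p \<in> E" and perp: "\<And>w. w \<in> E \<Longrightarrow> (v - p) \<bullet> w = 0"
  shows "orth_proj E v = p"
  unfolding orth_proj_def
proof (rule the_equality)
  show "p \<in> E \<and> (\<forall>w\<in>E. (v - p) \<bullet> w = 0)" using p perp by blast
next
  fix q assume q: "q \<in> E \<and> (\<forall>w\<in>E. (v - q) \<bullet> w = 0)"
  then have "q - p \<in> E" using diff p by blast
  then have "(v - p) \<bullet> (q - p) = 0" and "(v - q) \<bullet> (q - p) = 0"
    using perp q by blast+
  then have "(q - p) \<bullet> (q - p) = 0"
    by (simp add: inner_diff_left inner_diff_right algebra_simps)
  then show "q = p" by simp
qed

lemma gram_column_eigenvector:
  fixes g :: "'v::finite \<Rightarrow> 'v \<Rightarrow> real"
  assumes sym: "\<And>i j. g i j = g j i"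
    and square: "\<And>i j. (\<Sum>l\<in>UNIV. g l i * g l j) = c * g i j" and c: "c \<noteq> 0"
  shows "(\<chi> j. g j i / c) \<in> matrix_eigenspace g c"
proof -
  have "(\<Sum>j\<in>UNIV. g k j * (g j i / c)) = c * (g k i / c)" for k
  proof -
    have "(\<Sum>j\<in>UNIV. g k j * (g j i / c)) = (\<Sum>j\<in>UNIV. g j k * g j i) / c"
      by (simp add: sum_divide_distrib sym[of k])
    then show ?thesis using square[of k i] c by simp
  qed
  then show ?thesis by (simp add: matrix_eigenspace_def)
qed

lemma gram_column_projection:
  fixes g :: "'v::finite \<Rightarrow> 'v \<Rightarrow> real"
  assumes sym: "\<And>i j. g i j = g j i"
    and square: "\<And>i j. (\<Sum>l\<in>UNIV. g l i * g l j) = c * g i j" and c: "c \<noteq> 0"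
  shows "orth_proj (matrix_eigenspace g c) (axis i 1) = (\<chi> j. g j i / c)"
proof (rule orth_proj_eqI[OF matrix_eigenspace_diff gram_column_eigenvector[OF sym square c]])
  fix w assume "w \<in> matrix_eigenspace g c"
  then have "(\<Sum>j\<in>UNIV. g i j * w$j) = c * w$i"
    by (simp add: matrix_eigenspace_def)
  moreover have "(\<chi> j. g j i / c) \<bullet> w = (\<Sum>j\<in>UNIV. g i j * w$j) / c"
    by (simp add: inner_vec_def sum_divide_distrib sym[of _ i])
  ultimately show "(axis i 1 - (\<chi> j. g j i / c)) \<bullet> w = 0"
    using c by (simp add: inner_diff_left inner_axis')
qed

lemma gram_normalized_projections:
  fixes g :: "'v::finite \<Rightarrow> 'v \<Rightarrow> real"
  assumes sym: "\<And>i j. g i j = g j i" and diag: "\<And>i. g i i = 1"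
    and square: "\<And>i j. (\<Sum>l\<in>UNIV. g l i * g l j) = c * g i j" and c: "c > 0"
  shows "matrix_eigenspace g c \<noteq> {0}"
    and "proj_normalized_basis (matrix_eigenspace g c) i \<bullet> proj_normalized_basis (matrix_eigenspace g c) j
           = g i j"
proof -
  define p where "p i = (\<chi> j. g j i / c)" for i
  have "p i \<in> matrix_eigenspace g c" "p i $ i \<noteq> 0"
    using gram_column_eigenvector[OF sym square, of i] c diag[of i] by (simp_all add: p_def)
  then show "matrix_eigenspace g c \<noteq> {0}" by (metis singletonD zero_index)
  have inner_p: "p i \<bullet> p j = g i j / c" for i j
  proof -
    have "p i \<bullet> p j = (\<Sum>l\<in>UNIV. g l i * g l j) / (c * c)"
      by (simp add: p_def inner_vec_def sum_divide_distrib)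
    then show ?thesis using square[of i j] c by simp
  qed
  have "1 / norm (p i) = sqrt c" for i
    using inner_p[of i i] diag[of i] c by (simp add: norm_eq_sqrt_inner real_sqrt_divide)
  then have normalized: "proj_normalized_basis (matrix_eigenspace g c) i = sqrt c *\<^sub>R p i" for i
    using gram_column_projection[OF sym square, of i] c
    unfolding proj_normalized_basis_def Let_def p_def by simp
  have "proj_normalized_basis (matrix_eigenspace g c) i \<bullet> proj_normalized_basis (matrix_eigenspace g c) j
      = (sqrt c * sqrt c) * (p i \<bullet> p j)"
    by (simp add: normalized)
  also have "\<dots> = g i j"
    using c by (simp add: inner_p)
  finally show "proj_normalized_basis (matrix_eigenspace g c) i \<bullet> proj_normalized_basis (matrix_eigenspace g c) j
           = g i j" .
qed

theorem theorem3p4: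
  fixes x :: "'v::finite \<Rightarrow> 'a::euclidean_space" and a b :: real
  assumes design: "spherical_2design x"
    and ab: "a \<noteq> b"
    and two_dist: "\<forall>i j. i \<noteq> j \<longrightarrow> x i \<bullet> x j \<in> {a, b}"
    and srg: "strongly_regular (\<lambda>i j. i \<noteq> j \<and> x i \<bullet> x j = a)"
    and not_complete: "\<not> complete_graph (\<lambda>i j. i \<noteq> j \<and> x i \<bullet> x j = a)"
    and not_empty: "\<not> empty_graph (\<lambda>i j. i \<noteq> j \<and> x i \<bullet> x j = a)"
  shows "(\<exists>theta.
            eigenspace_perp1 (adj_matrix (\<lambda>i j. i \<noteq> j \<and> x i \<bullet> x j = a)) theta \<noteq> {0} \<and>
            (\<forall>i j. x i \<bullet> x j =
               proj_normalized_basis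
                 (eigenspace_perp1 (adj_matrix (\<lambda>i j. i \<noteq> j \<and> x i \<bullet> x j = a)) theta) i
               \<bullet> proj_normalized_basis
                 (eigenspace_perp1 (adj_matrix (\<lambda>i j. i \<noteq> j \<and> x i \<bullet> x j = a)) theta) j))
         \<or> (\<forall>i j. x i \<bullet> x j = (if i = j then 1 else - 1 / (real CARD('v) - 1)))"
proof -
  define g where "g = (\<lambda>i j. x i \<bullet> x j)"
  obtain c where c: "c > 0" and square: "\<And>i j. (\<Sum>l\<in>UNIV. g l i * g l j) = c * g i j"
    using spherical_2design_gram_square[OF design] unfolding g_def by blast
  have sym: "\<And>i j. g i j = g j i"
    by (simp add: g_def inner_commute)
  have diag: "\<And>i. g i i = 1"
    using design by (simp add: g_def spherical_2design_def norm_eq_1)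
  have rows: "\<And>i. (\<Sum>j\<in>UNIV. g i j) = 0"
    using design by (simp add: g_def spherical_2design_def flip: inner_sum_right)
  have eigenspace: "eigenspace_perp1 (adj_matrix (\<lambda>i j. i \<noteq> j \<and> x i \<bullet> x j = a))
                      ((c - 1 + b) / (a - b)) = matrix_eigenspace g c"
    using two_distance_eigenspace[OF sym diag rows _ ab, of c] two_dist c unfolding g_def by simp
  show ?thesis
  proof (intro disjI1 exI[of _ "(c - 1 + b) / (a - b)"] conjI allI)
    show "eigenspace_perp1 (adj_matrix (\<lambda>i j. i \<noteq> j \<and> x i \<bullet> x j = a))
            ((c - 1 + b) / (a - b)) \<noteq> {0}"
      unfolding eigenspace by (rule gram_normalized_projections(1)[OF sym diag square c])
    show "x i \<bullet> x j = proj_normalized_basis (eigenspace_perp1 (adj_matrix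
            (\<lambda>i j. i \<noteq> j \<and> x i \<bullet> x j = a)) ((c - 1 + b) / (a - b))) i \<bullet>
          proj_normalized_basis (eigenspace_perp1 (adj_matrix
            (\<lambda>i j. i \<noteq> j \<and> x i \<bullet> x j = a)) ((c - 1 + b) / (a - b))) j" for i j
      unfolding eigenspace gram_normalized_projections(2)[OF sym diag square c] by (simp add: g_def)
  qed
qed

end
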